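(* Let $\mathcal J$ be an $n\times n$ signed symbolic matrix with negative diagonal entries, and let $G$ be its J-graph. Fix nodes $i\neq j$, designating $i$ as input and $j$ as output, and let $\mathcal J[\hat i,\hat j]$ denote the minor obtained by deleting row $i$ and column $j$. Then: (1) $\mathcal J[\hat i,\hat j]$ is identically zero if and only if $G$ has no path from $i$ to $j$. (2) Suppose $G$ has a path from $i$ to $j$. Then $\mathcal J[\hat i,\hat j]$ has mixed signs if and only if either $G$ has an incoherent feedforward loop from $i$ to $j$, or $G$ has a positive feedback loop and a path from $i$ to $j$ that are vertex-disjoint.
   Context: A signed symbolic matrix is a matrix whose $(k,l)$ entry is either $a_{kl}$, $-a_{kl}$, or $0$, where the $a_{kl}$ are distinct variables; "negative diagonal" means the $(k,k)$ entry is $-a_{kk}$ for every $k$. A polynomial in the $a_{kl}$ has mixed signs if, after all cancellations, it has at least one monomial with positive coefficient and at least one with negative coefficient. The J-graph $G$ of $\mathcal J$ is the signed directed graph on nodes $1,\ldots,n$ with a positive (resp. negative) edge from $k$ to $l$ iff the $(l,k)$ entry of $\mathcal J$ is $a_{lk}$ (resp. $-a_{lk}$), and no edge otherwise. A path is a walk with no repeated vertices except possibly first = last, in which case it is a cycle; the sign of a set of edges is the product of their signs. A feedback loop is a cycle of length at least two; it is positive if its sign is positive. A feedforward loop from $i$ to $j$ ($j\ne i$) is a pair of distinct paths $P_1\neq P_2$ both starting at $i$ and ending at $j$; it is incoherent if $P_1$ and $P_2$ have opposite signs. *)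

theory Defs
  imports "HOL-Library.Poly_Mapping" "Jordan_Normal_Form.Determinant"
begin

text \<open>Multivariate integer polynomials in the variables a_kl, indexed by pairs (k,l):
  a monomial is a finitely supported exponent map, a polynomial a finitely supported
  coefficient map on monomials (convolution product).\<close>

type_synonym monom = "(nat \<times> nat) \<Rightarrow>\<^sub>0 nat"
type_synonym ipoly = "monom \<Rightarrow>\<^sub>0 int"

definition var :: "nat \<Rightarrow> nat \<Rightarrow> ipoly" where
  "var k l = Poly_Mapping.single (Poly_Mapping.single (k, l) 1) 1"

text \<open>Sign pattern s: s k l in {-1,0,1}; entry (k,l) of the symbolic matrix is s k l * a_kl.
  Nodes are 0..n-1.\<close>

definition sign_pattern :: "nat \<Rightarrow> (nat \<Rightarrow> nat \<Rightarrow> int) \<Rightarrow> bool" where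
  "sign_pattern n s \<longleftrightarrow> (\<forall>k<n. \<forall>l<n. s k l \<in> {-1, 0, 1})"

definition neg_diag :: "nat \<Rightarrow> (nat \<Rightarrow> nat \<Rightarrow> int) \<Rightarrow> bool" where
  "neg_diag n s \<longleftrightarrow> (\<forall>k<n. s k k = -1)"

definition sym_mat :: "nat \<Rightarrow> (nat \<Rightarrow> nat \<Rightarrow> int) \<Rightarrow> ipoly mat" where
  "sym_mat n s = mat n n (\<lambda>(k, l). of_int (s k l) * var k l)"

text \<open>J-graph: edge k -> l iff entry (l,k) is nonzero; its sign is s l k.\<close>

definition edge :: "(nat \<Rightarrow> nat \<Rightarrow> int) \<Rightarrow> nat \<Rightarrow> nat \<Rightarrow> bool" where
  "edge s k l \<longleftrightarrow> s l k \<noteq> 0"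

definition is_path_from :: "nat \<Rightarrow> (nat \<Rightarrow> nat \<Rightarrow> int) \<Rightarrow> nat \<Rightarrow> nat \<Rightarrow> nat list \<Rightarrow> bool" where
  "is_path_from n s i j vs \<longleftrightarrow>
     vs \<noteq> [] \<and> hd vs = i \<and> last vs = j \<and> distinct vs \<and> set vs \<subseteq> {..<n} \<and>
     (\<forall>t. Suc t < length vs \<longrightarrow> edge s (vs ! t) (vs ! Suc t))"

definition path_sign :: "(nat \<Rightarrow> nat \<Rightarrow> int) \<Rightarrow> nat list \<Rightarrow> int" where
  "path_sign s vs = (\<Prod>t < length vs - 1. s (vs ! Suc t) (vs ! t))"

definition is_feedback_loop :: "nat \<Rightarrow> (nat \<Rightarrow> nat \<Rightarrow> int) \<Rightarrow> nat list \<Rightarrow> bool" where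
  "is_feedback_loop n s vs \<longleftrightarrow>
     length vs \<ge> 2 \<and> distinct vs \<and> set vs \<subseteq> {..<n} \<and>
     (\<forall>t < length vs. edge s (vs ! t) (vs ! ((Suc t) mod length vs)))"

definition cycle_sign :: "(nat \<Rightarrow> nat \<Rightarrow> int) \<Rightarrow> nat list \<Rightarrow> int" where
  "cycle_sign s vs = (\<Prod>t < length vs. s (vs ! ((Suc t) mod length vs)) (vs ! t))"

definition incoherent_ffl :: "nat \<Rightarrow> (nat \<Rightarrow> nat \<Rightarrow> int) \<Rightarrow> nat \<Rightarrow> nat \<Rightarrow> bool" where
  "incoherent_ffl n s i j \<longleftrightarrow>
     (\<exists>P1 P2. is_path_from n s i j P1 \<and> is_path_from n s i j P2 \<and> P1 \<noteq> P2 \<and>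
              path_sign s P1 = - path_sign s P2)"

definition mixed_signs :: "ipoly \<Rightarrow> bool" where
  "mixed_signs p \<longleftrightarrow> (\<exists>m. Poly_Mapping.lookup p m > 0) \<and> (\<exists>m. Poly_Mapping.lookup p m < 0)"

end

theory Submission
  imports Defs "HOL-Combinatorics.Cycles"
begin

(* Up to the sign (-1)^(i+j), deleting row i and column j of J is the same as replacing row i by
   the j-th unit row. Hence the minor is the sum, over the permutations p of the nodes with
   p j = i, of sign p times the product of the entries J(p k, k) for k \<noteq> j; distinct
   permutations give distinct monomials, so the minor vanishes, or has mixed signs, exactly when
   these terms do. The cycle of such a p through i, read from i, is a path P from i to j in G,
   and p is this cycle composed with a permutation q of the nodes off P. The term of p is
   (-1)^(n-1) times the sign of P times the product, over the cycles of q, of minus their signs;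
   fixed points contribute 1 because the diagonal is negative. Taking q = id, or q a positive
   loop disjoint from P, realizes both signs; without incoherent feedforward loops and without
   positive loops disjoint from a path, every term has the same sign. *)

section \<open>Minors as signed permutation sums\<close>

definition replace_row_by_unit :: "'a::{zero,one} mat \<Rightarrow> nat \<Rightarrow> nat \<Rightarrow> 'a mat" where
  "replace_row_by_unit A i j =
     mat (dim_row A) (dim_col A) (\<lambda>(k, l). if k = i then (if l = j then 1 else 0) else A $$ (k, l))"

lemma det_replace_row_by_unit_eq_cofactor:
  fixes A :: "'a::comm_ring_1 mat"
  assumes A: "A \<in> carrier_mat n n" and "i < n" "j < n"
  shows "det (replace_row_by_unit A i j) = cofactor A i j"
proof -
  let ?B = "replace_row_by_unit A i j"
  have B: "?B \<in> carrier_mat n n"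
    using A by (simp add: replace_row_by_unit_def)
  have "det ?B = (\<Sum>l<n. ?B $$ (i, l) * cofactor ?B i l)"
    by (rule laplace_expansion_row[OF B \<open>i < n\<close>])
  also have "\<dots> = (\<Sum>l<n. if l = j then cofactor ?B i l else 0)"
    using A assms by (intro sum.cong) (auto simp: replace_row_by_unit_def)
  also have "\<dots> = cofactor ?B i j"
    using \<open>j < n\<close> by simp
  also have "mat_delete ?B i j = mat_delete A i j"
    using A by (intro eq_matI) (auto simp: mat_delete_def replace_row_by_unit_def)
  then have "cofactor ?B i j = cofactor A i j"
    by (simp add: cofactor_def)
  finally show ?thesis .
qed

lemma prod_replace_row_by_unit:
  fixes A :: "'a::comm_ring_1 mat"
  assumes A: "A \<in> carrier_mat n n" and "i < n" "j < n" and p: "p permutes {..<n}"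
  shows "(\<Prod>k<n. replace_row_by_unit A i j $$ (p k, k)) =
    (if p j = i then (\<Prod>k\<in>{..<n} - {j}. A $$ (p k, k)) else 0)"
proof (cases "p j = i")
  case True
  let ?B = "replace_row_by_unit A i j"
  have "(\<Prod>k<n. ?B $$ (p k, k)) = ?B $$ (p j, j) * (\<Prod>k\<in>{..<n} - {j}. ?B $$ (p k, k))"
    using \<open>j < n\<close> by (simp add: prod.remove)
  also have "?B $$ (p j, j) = 1"
    using A True assms by (simp add: replace_row_by_unit_def)
  also have "(\<Prod>k\<in>{..<n} - {j}. ?B $$ (p k, k)) = (\<Prod>k\<in>{..<n} - {j}. A $$ (p k, k))"
  proof (rule prod.cong[OF refl])
    fix k assume k: "k \<in> {..<n} - {j}"
    then have "p k \<noteq> i"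
      using True permutes_inj[OF p] by (auto dest: injD)
    moreover have "p k < n"
      using k permutes_in_image[OF p] by auto
    ultimately show "?B $$ (p k, k) = A $$ (p k, k)"
      using A k by (simp add: replace_row_by_unit_def)
  qed
  finally show ?thesis
    using True by simp
next
  case False
  obtain k where "k < n" "p k = i"
    using permutes_image[OF p] \<open>i < n\<close> by (metis imageE lessThan_iff)
  with False have "replace_row_by_unit A i j $$ (p k, k) = 0"
    using A \<open>i < n\<close> by (auto simp: replace_row_by_unit_def)
  with \<open>k < n\<close> have "(\<Prod>k<n. replace_row_by_unit A i j $$ (p k, k)) = 0"
    by (intro prod_zero) auto
  with False show ?thesis
    by simp
qed

lemma det_replace_row_by_unit_perm_sum:
  fixes A :: "'a::comm_ring_1 mat"
  assumes A: "A \<in> carrier_mat n n" and "i < n" "j < n"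
  shows "det (replace_row_by_unit A i j) =
    (\<Sum>p | p permutes {..<n} \<and> p j = i. signof p * (\<Prod>k\<in>{..<n} - {j}. A $$ (p k, k)))"
proof -
  let ?term = "\<lambda>p. signof p * (\<Prod>k\<in>{..<n} - {j}. A $$ (p k, k))"
  have "replace_row_by_unit A i j \<in> carrier_mat n n"
    using A by (simp add: replace_row_by_unit_def)
  then have "det (replace_row_by_unit A i j) =
      (\<Sum>p | p permutes {..<n}. signof p * (\<Prod>k<n. replace_row_by_unit A i j $$ (p k, k)))"
    by (simp add: det_col atLeast0LessThan)
  also have "\<dots> = (\<Sum>p | p permutes {..<n}. if p j = i then ?term p else 0)"
    using prod_replace_row_by_unit[OF assms] by (intro sum.cong) auto
  also have "\<dots> = (\<Sum>p\<in>{p \<in> {p. p permutes {..<n}}. p j = i}. ?term p)"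
    by (rule sum.inter_filter[symmetric]) (simp add: finite_permutations)
  also have "{p \<in> {p. p permutes {..<n}}. p j = i} = {p. p permutes {..<n} \<and> p j = i}"
    by blast
  finally show ?thesis .
qed

lemma det_mat_delete_perm_sum:
  fixes A :: "'a::comm_ring_1 mat"
  assumes "A \<in> carrier_mat n n" and "i < n" "j < n"
  shows "det (mat_delete A i j) =
    (-1)^(i+j) * (\<Sum>p | p permutes {..<n} \<and> p j = i. signof p * (\<Prod>k\<in>{..<n} - {j}. A $$ (p k, k)))"
proof -
  have "det (mat_delete A i j) = (-1)^(i+j) * cofactor A i j"
    by (simp add: cofactor_def mult.assoc[symmetric] minus_one_mult_self)
  then show ?thesis
    using det_replace_row_by_unit_eq_cofactor[OF assms] det_replace_row_by_unit_perm_sum[OF assms]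
    by simp
qed

section \<open>Coefficients of the symbolic minor\<close>

lemma nonzero_lookups_sum_single:
  fixes c :: "'b \<Rightarrow> 'c::comm_monoid_add"
  assumes "finite S" and inj: "inj_on f S"
  shows "range (Poly_Mapping.lookup (\<Sum>p\<in>S. Poly_Mapping.single (f p) (c p))) - {0} = c ` S - {0}"
proof -
  let ?Q = "\<Sum>p\<in>S. Poly_Mapping.single (f p) (c p)"
  have lookup_Q: "Poly_Mapping.lookup ?Q m = (\<Sum>p\<in>S. if f p = m then c p else 0)" for m
    by (simp add: lookup_sum lookup_single when_def eq_commute)
  have at: "Poly_Mapping.lookup ?Q (f p) = c p" if "p \<in> S" for p
  proof -
    have "Poly_Mapping.lookup ?Q (f p) = (\<Sum>p'\<in>S. if p' = p then c p' else 0)"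
      unfolding lookup_Q using inj that by (intro sum.cong) (auto dest: inj_onD)
    then show ?thesis
      using \<open>finite S\<close> that by simp
  qed
  have outside: "Poly_Mapping.lookup ?Q m = 0" if "m \<notin> f ` S" for m
    unfolding lookup_Q using that by (intro sum.neutral) auto
  show ?thesis
  proof
    show "range (Poly_Mapping.lookup ?Q) - {0} \<subseteq> c ` S - {0}"
    proof
      fix x assume "x \<in> range (Poly_Mapping.lookup ?Q) - {0}"
      then obtain m where x: "x = Poly_Mapping.lookup ?Q m" "x \<noteq> 0"
        by auto
      then obtain p where "p \<in> S" "m = f p"
        using outside by blast
      then show "x \<in> c ` S - {0}"
        using at x by auto
    qed
    show "c ` S - {0} \<subseteq> range (Poly_Mapping.lookup ?Q) - {0}"
    proof
      fix x assume "x \<in> c ` S - {0}"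
      then obtain p where "p \<in> S" "x = c p" "x \<noteq> 0"
        by auto
      then show "x \<in> range (Poly_Mapping.lookup ?Q) - {0}"
        using at[of p] by (metis DiffI rangeI singletonD)
    qed
  qed
qed

lemma bex_image_minus_zero:
  assumes "\<not> P 0"
  shows "(\<exists>c\<in>g ` A - {0}. P c) \<longleftrightarrow> (\<exists>x\<in>A. P (g x))"
proof
  assume "\<exists>c\<in>g ` A - {0}. P c"
  then show "\<exists>x\<in>A. P (g x)"
    by auto
next
  assume "\<exists>x\<in>A. P (g x)"
  then obtain x where "x \<in> A" "P (g x)"
    by blast
  moreover from assms \<open>P (g x)\<close> have "g x \<noteq> 0"
    by auto
  ultimately show "\<exists>c\<in>g ` A - {0}. P c"
    by blast
qed

lemma prod_of_int_var:
  assumes "finite K"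
  shows "(\<Prod>k\<in>K. of_int (c k) * var (f k) (g k)) =
    Poly_Mapping.single (\<Sum>k\<in>K. Poly_Mapping.single (f k, g k) 1) (\<Prod>k\<in>K. c k)"
  using assms
  by (induction K rule: finite_induct) (simp_all add: var_def mult_single flip: single_of_int)

definition minor_perms :: "nat \<Rightarrow> nat \<Rightarrow> nat \<Rightarrow> (nat \<Rightarrow> nat) set" where
  "minor_perms n i j = {p. p permutes {..<n} \<and> p j = i}"

definition perm_monom :: "nat \<Rightarrow> nat \<Rightarrow> (nat \<Rightarrow> nat) \<Rightarrow> monom" where
  "perm_monom n j p = (\<Sum>k\<in>{..<n} - {j}. Poly_Mapping.single (p k, k) 1)"

definition perm_coeff :: "nat \<Rightarrow> (nat \<Rightarrow> nat \<Rightarrow> int) \<Rightarrow> nat \<Rightarrow> (nat \<Rightarrow> nat) \<Rightarrow> int" where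
  "perm_coeff n s j p = sign p * (\<Prod>k\<in>{..<n} - {j}. s (p k) k)"

lemma finite_minor_perms: "finite (minor_perms n i j)"
  unfolding minor_perms_def
  by (rule finite_subset[OF _ finite_permutations[of "{..<n}"]]) auto

lemma det_minor_sym_mat:
  assumes "i < n" "j < n"
  shows "det (mat_delete (sym_mat n s) i j) =
    (\<Sum>p\<in>minor_perms n i j. Poly_Mapping.single (perm_monom n j p) ((-1)^(i+j) * perm_coeff n s j p))"
proof -
  have "det (mat_delete (sym_mat n s) i j) = (-1)^(i+j) *
      (\<Sum>p | p permutes {..<n} \<and> p j = i. signof p * (\<Prod>k\<in>{..<n} - {j}. sym_mat n s $$ (p k, k)))"
    by (rule det_mat_delete_perm_sum) (simp_all add: sym_mat_def assms)
  also have "(\<Sum>p | p permutes {..<n} \<and> p j = i. signof p * (\<Prod>k\<in>{..<n} - {j}. sym_mat n s $$ (p k, k))) =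
      (\<Sum>p\<in>minor_perms n i j. Poly_Mapping.single (perm_monom n j p) (perm_coeff n s j p))"
    unfolding minor_perms_def
  proof (rule sum.cong[OF refl])
    fix p assume "p \<in> {p. p permutes {..<n} \<and> p j = i}"
    then have p: "p permutes {..<n}" by simp
    have "(\<Prod>k\<in>{..<n} - {j}. sym_mat n s $$ (p k, k)) =
        (\<Prod>k\<in>{..<n} - {j}. of_int (s (p k) k) * var (p k) k)"
      using permutes_in_image[OF p] by (intro prod.cong) (auto simp: sym_mat_def)
    also have "\<dots> = Poly_Mapping.single (perm_monom n j p) (\<Prod>k\<in>{..<n} - {j}. s (p k) k)"
      unfolding perm_monom_def by (rule prod_of_int_var) simp
    finally show "signof p * (\<Prod>k\<in>{..<n} - {j}. sym_mat n s $$ (p k, k)) =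
        Poly_Mapping.single (perm_monom n j p) (perm_coeff n s j p)"
      by (simp add: perm_coeff_def mult_single flip: single_of_int)
  qed
  also have "((-1)^(i+j) :: ipoly) = of_int ((-1)^(i+j))"
    by simp
  finally show ?thesis
    by (simp add: sum_distrib_left mult_single flip: single_of_int)
qed

lemma lookup_perm_monom:
  "Poly_Mapping.lookup (perm_monom n j p) (a, b) = (if b \<in> {..<n} - {j} \<and> a = p b then 1 else 0)"
proof -
  have "Poly_Mapping.lookup (perm_monom n j p) (a, b) =
      (\<Sum>k\<in>{..<n} - {j}. if k = b then (if a = p b then 1 else 0) else 0)"
    unfolding perm_monom_def lookup_sum lookup_single by (intro sum.cong) (auto simp: when_def)
  then show ?thesis
    by simp
qed

lemma inj_on_perm_monom: "inj_on (perm_monom n j) (minor_perms n i j)"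
proof (rule inj_onI)
  fix p p' assume "p \<in> minor_perms n i j" "p' \<in> minor_perms n i j"
    and eq: "perm_monom n j p = perm_monom n j p'"
  then have p: "p permutes {..<n}" "p j = i" and p': "p' permutes {..<n}" "p' j = i"
    by (auto simp: minor_perms_def)
  show "p = p'"
  proof
    fix b
    show "p b = p' b"
    proof (cases "b \<in> {..<n} - {j}")
      case True
      then have "Poly_Mapping.lookup (perm_monom n j p') (p b, b) = 1"
        by (simp add: lookup_perm_monom flip: eq)
      then show ?thesis
        by (simp add: lookup_perm_monom split: if_splits)
    next
      case False
      then show ?thesis
        using p p' permutes_not_in by (metis Diff_iff singletonD)
    qed
  qed
qed

lemma nonzero_coeffs_det_minor:
  assumes "i < n" "j < n"
  shows "range (Poly_Mapping.lookup (det (mat_delete (sym_mat n s) i j))) - {0} =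
    (\<lambda>p. (-1)^(i+j) * perm_coeff n s j p) ` minor_perms n i j - {0}"
  unfolding det_minor_sym_mat[OF assms]
  by (rule nonzero_lookups_sum_single[OF finite_minor_perms inj_on_perm_monom])

lemma det_minor_eq_0_iff:
  assumes "i < n" "j < n"
  shows "det (mat_delete (sym_mat n s) i j) = 0 \<longleftrightarrow> (\<forall>p\<in>minor_perms n i j. perm_coeff n s j p = 0)"
proof -
  let ?D = "det (mat_delete (sym_mat n s) i j)"
  have "?D = 0 \<longleftrightarrow> range (Poly_Mapping.lookup ?D) - {0} = {}"
    by (auto simp: poly_mapping_eq_iff fun_eq_iff)
  also have "\<dots> \<longleftrightarrow> (\<lambda>p. (-1)^(i+j) * perm_coeff n s j p) ` minor_perms n i j - {0} = {}"
    by (simp only: nonzero_coeffs_det_minor[OF assms])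
  finally show ?thesis
    by auto
qed

lemma mixed_signs_det_minor_iff:
  assumes "i < n" "j < n"
  shows "mixed_signs (det (mat_delete (sym_mat n s) i j)) \<longleftrightarrow>
    (\<exists>p\<in>minor_perms n i j. perm_coeff n s j p > 0) \<and> (\<exists>p\<in>minor_perms n i j. perm_coeff n s j p < 0)"
proof -
  let ?D = "det (mat_delete (sym_mat n s) i j)"
  let ?c = "\<lambda>p. (-1)^(i+j) * perm_coeff n s j p"
  have "mixed_signs ?D \<longleftrightarrow>
      (\<exists>c\<in>range (Poly_Mapping.lookup ?D) - {0}. c > 0) \<and> (\<exists>c\<in>range (Poly_Mapping.lookup ?D) - {0}. c < 0)"
    by (simp add: mixed_signs_def bex_image_minus_zero)
  also have "\<dots> \<longleftrightarrow> (\<exists>c\<in>?c ` minor_perms n i j - {0}. c > 0) \<and> (\<exists>c\<in>?c ` minor_perms n i j - {0}. c < 0)"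
    by (simp only: nonzero_coeffs_det_minor[OF assms])
  also have "\<dots> \<longleftrightarrow> (\<exists>p\<in>minor_perms n i j. ?c p > 0) \<and> (\<exists>p\<in>minor_perms n i j. ?c p < 0)"
    by (simp add: bex_image_minus_zero)
  finally show ?thesis
    by (cases "even (i+j)") auto
qed

section \<open>Cycles of permutations\<close>

lemma sign_cycle_of_list:
  assumes "distinct cs"
  shows "sign (cycle_of_list cs) = (-1)^(length cs - 1)"
  using assms
proof (induction cs rule: cycle_of_list.induct)
  case (1 i j cs)
  have "sign (cycle_of_list (i # j # cs)) = sign (transpose i j) * sign (cycle_of_list (j # cs))"
    by (simp add: sign_compose permutation_swap_id permutation_of_cycle)
  also have "\<dots> = - ((-1)^(length cs))"
    using 1 by (simp add: sign_swap_id)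
  finally show ?case
    by (simp add: comp_def)
qed simp_all

lemma cycle_of_list_nth:
  assumes "distinct cs" "t < length cs"
  shows "cycle_of_list cs (cs ! t) = cs ! (Suc t mod length cs)"
proof -
  have "map (cycle_of_list cs) cs = rotate1 cs"
    using cyclic_rotation[OF assms(1), of 1] by simp
  then have "cycle_of_list cs (cs ! t) = rotate1 cs ! t"
    using assms(2) by (metis nth_map)
  then show ?thesis
    using nth_rotate1[OF assms(2)] by simp
qed

lemma comp_apply_disjoint_permutes:
  assumes q1: "q1 permutes A" and q2: "q2 permutes B" and "A \<inter> B = {}"
  shows "k \<in> A \<Longrightarrow> (q1 \<circ> q2) k = q1 k" and "k \<notin> A \<Longrightarrow> (q1 \<circ> q2) k = q2 k"
proof -
  show "(q1 \<circ> q2) k = q1 k" if "k \<in> A"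
  proof -
    from that assms(3) have "k \<notin> B"
      by blast
    then show ?thesis
      using permutes_not_in[OF q2] by simp
  qed
  show "(q1 \<circ> q2) k = q2 k" if "k \<notin> A"
  proof (cases "k \<in> B")
    case True
    then have "q2 k \<in> B"
      by (simp add: permutes_in_image[OF q2])
    with assms(3) have "q2 k \<notin> A"
      by blast
    then show ?thesis
      using permutes_not_in[OF q1] by simp
  next
    case False
    then show ?thesis
      using that permutes_not_in[OF q1] permutes_not_in[OF q2] by simp
  qed
qed

lemma nonzero_entries_comp_disjoint_permutes:
  assumes "q1 permutes A" "q2 permutes B" "A \<inter> B = {}" and nz: "\<forall>k\<in>A \<union> B. s ((q1 \<circ> q2) k) k \<noteq> 0"
  shows "\<forall>k\<in>A. s (q1 k) k \<noteq> 0" and "\<forall>k\<in>B. s (q2 k) k \<noteq> 0"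
proof -
  note apply_comp = comp_apply_disjoint_permutes[OF assms(1-3)]
  show "\<forall>k\<in>A. s (q1 k) k \<noteq> 0"
  proof
    fix k assume "k \<in> A"
    from apply_comp(1)[OF this] nz this show "s (q1 k) k \<noteq> 0"
      by (metis UnI1)
  qed
  show "\<forall>k\<in>B. s (q2 k) k \<noteq> 0"
  proof
    fix k assume "k \<in> B"
    with assms(3) have "k \<notin> A"
      by blast
    from apply_comp(2)[OF this] nz \<open>k \<in> B\<close> show "s (q2 k) k \<noteq> 0"
      by (metis UnI2)
  qed
qed

lemma support_step:
  assumes "permutation p" "t < length (support p a)"
  shows "p (support p a ! t) = support p a ! (Suc t mod length (support p a))"
proof -
  define cs where "cs = support p a"
  have "cs ! t \<in> set cs"
    using assms(2) unfolding cs_def by (rule nth_mem)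
  then have "p (cs ! t) = cycle_of_list cs (cs ! t)"
    unfolding cs_def by (rule cycle_restrict[OF assms(1)])
  also have "\<dots> = cs ! (Suc t mod length cs)"
    using cycle_of_list_nth[OF cycle_of_permutation[OF assms(1)] assms(2)] unfolding cs_def .
  finally show ?thesis
    unfolding cs_def .
qed

lemma permutes_decompose_support:
  assumes "p permutes U" "finite U" "a \<in> U"
  defines "q \<equiv> \<lambda>y. if y \<in> U - set (support p a) then p y else y"
  shows "q permutes U - set (support p a)" and "p = cycle_of_list (support p a) \<circ> q"
proof -
  show "q permutes U - set (support p a)"
    unfolding q_def by (rule semidecomposition[OF assms(1,2)])
  have perm: "permutation p"
    by (rule permutes_imp_permutation[OF assms(2,1)])
  show "p = cycle_of_list (support p a) \<circ> q"
  proof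
    fix x
    consider "x \<in> U - set (support p a)" | "x \<in> set (support p a)" | "x \<notin> U" "x \<notin> set (support p a)"
      by blast
    then show "p x = (cycle_of_list (support p a) \<circ> q) x"
    proof cases
      case 1
      have "(p ^^ 1) x \<in> set (support p x)"
        unfolding support_set[OF perm] by blast
      with 1 have "p x \<notin> set (support p a)"
        using disjoint_support'[OF perm, of x a] by auto
      with 1 show ?thesis
        using id_outside_supp[of _ "support p a"] unfolding q_def by simp
    next
      case 2
      then show ?thesis
        using cycle_restrict[OF perm] unfolding q_def by simp
    next
      case 3
      then show ?thesis
        using id_outside_supp[OF 3(2)] assms(1) permutes_not_in unfolding q_def by fastforce
    qed
  qed
qed

lemma set_support_subset:
  assumes "p permutes U" "a \<in> U"
  shows "set (support p a) \<subseteq> U"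
  using permutes_in_image[OF permutes_funpow[OF assms(1)]] assms(2) by auto

lemma cycle_decomp_permutes:
  assumes "cycle_decomp I p"
  shows "p permutes I"
  using assms
proof (induction rule: cycle_decomp.induct)
  case empty
  show ?case
    by (rule permutes_id)
next
  case (comp I p cs)
  show ?case
    using permutes_compose[OF permutes_subset[OF comp.IH] permutes_subset[OF cycle_permutes]] by blast
qed

lemma prod_in_plus_minus_one:
  assumes "finite A" "\<forall>x\<in>A. f x \<in> {-1, 1::int}"
  shows "prod f A \<in> {-1, 1}"
  using assms by (induction A rule: finite_induct) auto

lemma prod_cycle_of_list:
  assumes "distinct cs"
  shows "(\<Prod>k\<in>set cs. s (cycle_of_list cs k) k) = cycle_sign s cs"
proof -
  have "set cs = (!) cs ` {..<length cs}"
    by (auto simp: in_set_conv_nth)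
  moreover have "inj_on ((!) cs) {..<length cs}"
    using assms by (intro inj_on_nth) auto
  ultimately have "(\<Prod>k\<in>set cs. s (cycle_of_list cs k) k) =
      (\<Prod>t<length cs. s (cycle_of_list cs (cs ! t)) (cs ! t))"
    by (simp add: prod.reindex)
  also have "\<dots> = cycle_sign s cs"
    unfolding cycle_sign_def using assms by (intro prod.cong) (auto simp: cycle_of_list_nth)
  finally show ?thesis .
qed

lemma prod_cycle_of_list_butlast:
  assumes "distinct cs" "cs \<noteq> []"
  shows "(\<Prod>k\<in>set cs - {last cs}. s (cycle_of_list cs k) k) = path_sign s cs"
proof -
  have "set cs - {last cs} = (!) cs ` {..<length cs - 1}"
  proof
    show "set cs - {last cs} \<subseteq> (!) cs ` {..<length cs - 1}"
    proof
      fix x assume "x \<in> set cs - {last cs}"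
      then obtain t where t: "t < length cs" "x = cs ! t" "x \<noteq> last cs"
        by (auto simp: in_set_conv_nth)
      then have "t \<noteq> length cs - 1"
        using assms(2) by (auto simp: last_conv_nth)
      with t show "x \<in> (!) cs ` {..<length cs - 1}"
        by auto
    qed
    show "(!) cs ` {..<length cs - 1} \<subseteq> set cs - {last cs}"
      using assms by (auto simp: last_conv_nth nth_eq_iff_index_eq)
  qed
  moreover have "inj_on ((!) cs) {..<length cs - 1}"
    using assms by (intro inj_on_nth) auto
  ultimately have "(\<Prod>k\<in>set cs - {last cs}. s (cycle_of_list cs k) k) =
      (\<Prod>t<length cs - 1. s (cycle_of_list cs (cs ! t)) (cs ! t))"
    by (simp add: prod.reindex)
  also have "\<dots> = path_sign s cs"
    unfolding path_sign_def using assms by (intro prod.cong) (auto simp: cycle_of_list_nth)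
  finally show ?thesis .
qed

lemma sign_of_edge:
  assumes "sign_pattern n s" "k < n" "l < n" "edge s k l"
  shows "s l k \<in> {-1, 1}"
  using assms unfolding sign_pattern_def edge_def by auto

lemma path_sign_of_path:
  assumes sp: "sign_pattern n s" and P: "is_path_from n s i j P"
  shows "path_sign s P \<in> {-1, 1}"
  unfolding path_sign_def
proof (rule prod_in_plus_minus_one, simp, intro ballI)
  fix t assume "t \<in> {..<length P - 1}"
  then have t: "Suc t < length P"
    by auto
  then have "P ! t \<in> set P" "P ! Suc t \<in> set P"
    by simp_all
  then have "P ! t < n" "P ! Suc t < n"
    using P unfolding is_path_from_def by auto
  moreover have "edge s (P ! t) (P ! Suc t)"
    using P t unfolding is_path_from_def by blast
  ultimately show "s (P ! Suc t) (P ! t) \<in> {-1, 1}"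
    by (rule sign_of_edge[OF sp])
qed

lemma cycle_sign_of_feedback_loop:
  assumes sp: "sign_pattern n s" and C: "is_feedback_loop n s C"
  shows "cycle_sign s C \<in> {-1, 1}"
  unfolding cycle_sign_def
proof (rule prod_in_plus_minus_one, simp, intro ballI)
  fix t assume "t \<in> {..<length C}"
  then have t: "t < length C"
    by simp
  then have "Suc t mod length C < length C"
    by (intro mod_less_divisor) (cases C, auto)
  with t have "C ! t \<in> set C" "C ! (Suc t mod length C) \<in> set C"
    by simp_all
  then have "C ! t < n" "C ! (Suc t mod length C) < n"
    using C unfolding is_feedback_loop_def by auto
  moreover have "edge s (C ! t) (C ! (Suc t mod length C))"
    using C t unfolding is_feedback_loop_def by blast
  ultimately show "s (C ! (Suc t mod length C)) (C ! t) \<in> {-1, 1}"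
    by (rule sign_of_edge[OF sp])
qed

section \<open>The contribution of the cycles off the path\<close>

text \<open>For a permutation q of U this is the product, over the cycles of q, of minus the sign of the
  cycle; a fixed point k counts as a cycle of sign s k k.\<close>

definition cycle_factor :: "(nat \<Rightarrow> nat \<Rightarrow> int) \<Rightarrow> nat set \<Rightarrow> (nat \<Rightarrow> nat) \<Rightarrow> int" where
  "cycle_factor s U q = (-1)^card U * sign q * (\<Prod>k\<in>U. s (q k) k)"

lemma cycle_factor_compose:
  assumes "finite A" "finite B" "A \<inter> B = {}" and q1: "q1 permutes A" and q2: "q2 permutes B"
  shows "cycle_factor s (A \<union> B) (q1 \<circ> q2) = cycle_factor s A q1 * cycle_factor s B q2"
proof -
  note apply_comp = comp_apply_disjoint_permutes[OF q1 q2 assms(3)]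
  have "card (A \<union> B) = card A + card B"
    using assms by (simp add: card_Un_disjoint)
  moreover have "sign (q1 \<circ> q2) = sign q1 * sign q2"
    using permutes_imp_permutation[OF assms(1) q1] permutes_imp_permutation[OF assms(2) q2]
    by (rule sign_compose)
  moreover have "(\<Prod>k\<in>A \<union> B. s ((q1 \<circ> q2) k) k) = (\<Prod>k\<in>A. s (q1 k) k) * (\<Prod>k\<in>B. s (q2 k) k)"
  proof -
    have "(\<Prod>k\<in>A \<union> B. s ((q1 \<circ> q2) k) k) = (\<Prod>k\<in>A. s ((q1 \<circ> q2) k) k) * (\<Prod>k\<in>B. s ((q1 \<circ> q2) k) k)"
      using assms by (simp add: prod.union_disjoint)
    also have "(\<Prod>k\<in>A. s ((q1 \<circ> q2) k) k) = (\<Prod>k\<in>A. s (q1 k) k)"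
      by (rule prod.cong[OF refl]) (metis apply_comp(1))
    also have "(\<Prod>k\<in>B. s ((q1 \<circ> q2) k) k) = (\<Prod>k\<in>B. s (q2 k) k)"
      by (rule prod.cong[OF refl]) (metis apply_comp(2) assms(3) disjoint_iff)
    finally show ?thesis .
  qed
  ultimately show ?thesis
    unfolding cycle_factor_def by (simp add: power_add mult_ac)
qed

lemma cycle_factor_id:
  assumes "neg_diag n s" "U \<subseteq> {..<n}"
  shows "cycle_factor s U id = 1"
proof -
  have "(\<Prod>k\<in>U. s k k) = (\<Prod>k\<in>U. -1)"
    using assms by (intro prod.cong) (auto simp: neg_diag_def)
  then show ?thesis
    by (simp add: cycle_factor_def minus_one_mult_self)
qed

lemma cycle_factor_cycle_of_list:
  assumes "distinct cs" "cs \<noteq> []"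
  shows "cycle_factor s (set cs) (cycle_of_list cs) = - cycle_sign s cs"
proof -
  obtain m where "length cs = Suc m"
    using assms(2) by (cases cs) auto
  then show ?thesis
    using assms
    by (simp add: cycle_factor_def distinct_card sign_cycle_of_list prod_cycle_of_list minus_one_mult_self)
qed

lemma cycle_factor_cycle_of_list_eq_1:
  assumes sp: "sign_pattern n s" and nd: "neg_diag n s"
    and cs: "distinct cs" "set cs \<subseteq> {..<n}"
    and nz: "\<forall>k\<in>set cs. s (cycle_of_list cs k) k \<noteq> 0"
    and not_positive: "\<not> (is_feedback_loop n s cs \<and> cycle_sign s cs = 1)"
  shows "cycle_factor s (set cs) (cycle_of_list cs) = 1"
proof (cases "length cs \<ge> 2")
  case True
  have "is_feedback_loop n s cs"
    unfolding is_feedback_loop_def edge_def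
  proof (intro conjI allI impI)
    fix t assume t: "t < length cs"
    then have "s (cycle_of_list cs (cs ! t)) (cs ! t) \<noteq> 0"
      using nz by simp
    then show "s (cs ! (Suc t mod length cs)) (cs ! t) \<noteq> 0"
      using cycle_of_list_nth[OF cs(1) t] by simp
  qed (use True cs in auto)
  with not_positive cycle_sign_of_feedback_loop[OF sp] have "cycle_sign s cs = -1"
    by blast
  moreover have "cs \<noteq> []"
    using True by auto
  ultimately show ?thesis
    using cycle_factor_cycle_of_list[OF cs(1)] by simp
next
  case False
  show ?thesis
  proof (cases cs)
    case Nil
    then show ?thesis
      by (simp add: cycle_factor_def)
  next
    case (Cons a rest)
    with False have "cs = [a]"
      by (simp add: Suc_le_eq)
    then show ?thesis
      using nd cs(2) by (simp add: cycle_factor_def neg_diag_def)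
  qed
qed

text \<open>Every cycle of q is a fixed point (contributing 1 because the diagonal is negative) or a
  feedback loop, which by assumption is negative.\<close>

lemma cycle_factor_eq_1_if_no_positive_loop:
  assumes sp: "sign_pattern n s" and nd: "neg_diag n s"
    and q: "q permutes U" and U: "U \<subseteq> {..<n}" and nz: "\<forall>k\<in>U. s (q k) k \<noteq> 0"
    and no_loop: "\<not> (\<exists>C. is_feedback_loop n s C \<and> cycle_sign s C = 1 \<and> set C \<subseteq> U)"
  shows "cycle_factor s U q = 1"
proof -
  have "cycle_decomp U q"
    by (rule cycle_decomposition[OF q finite_subset[OF U finite_lessThan]])
  then show ?thesis
    using U nz no_loop
  proof (induction rule: cycle_decomp.induct)
    case empty
    then show ?case
      by (simp add: cycle_factor_def)
  next
    case (comp I p cs)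
    have p: "p permutes I"
      by (rule cycle_decomp_permutes[OF comp.hyps(1)])
    note nz = nonzero_entries_comp_disjoint_permutes[where s = s, OF cycle_permutes p comp.hyps(3) comp.prems(2)]
    have "cycle_factor s I p = 1"
      using comp.prems(1,3) nz(2) by (intro comp.IH) blast+
    moreover have "cycle_factor s (set cs) (cycle_of_list cs) = 1"
      using comp.prems(1,3) nz(1) by (intro cycle_factor_cycle_of_list_eq_1[OF sp nd comp.hyps(2)]) blast+
    moreover have "finite I"
      using comp.prems(1) by (intro finite_subset[OF _ finite_lessThan]) auto
    ultimately show ?case
      using cycle_factor_compose[OF finite_set \<open>finite I\<close> comp.hyps(3) cycle_permutes p]
      by (metis mult_1_left)
  qed
qed

section \<open>Terms of the minor and paths of the J-graph\<close>

lemma minus_one_power_path_length: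
  assumes "1 \<le> L" "L \<le> n"
  shows "(-1::'a::comm_ring_1)^(L - 1) = (-1)^(n - 1) * (-1)^(n - L)"
proof -
  have "(L - 1) + (n - L) = n - 1"
    using assms by arith
  then have "(-1::'a)^(n - 1) = (-1)^(L - 1) * (-1)^(n - L)"
    by (metis power_add)
  then show ?thesis
    by (simp add: mult.assoc minus_one_mult_self)
qed

lemma cycle_of_list_path_comp_mem_minor_perms:
  assumes P: "is_path_from n s i j P" and q: "q permutes {..<n} - set P"
  shows "cycle_of_list P \<circ> q \<in> minor_perms n i j"
proof -
  have ne: "P \<noteq> []" and dist: "distinct P" and PV: "set P \<subseteq> {..<n}"
    using P unfolding is_path_from_def by auto
  have "cycle_of_list P (last P) = hd P"
    using cycle_of_list_nth[OF dist, of "length P - 1"] ne by (simp add: last_conv_nth hd_conv_nth)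
  moreover have "q (last P) = last P"
    using permutes_not_in[OF q] last_in_set[OF ne] by simp
  moreover have "cycle_of_list P \<circ> q permutes {..<n}"
    using permutes_compose[OF permutes_subset[OF q] permutes_subset[OF cycle_permutes PV]] by blast
  ultimately show ?thesis
    using P unfolding minor_perms_def is_path_from_def by auto
qed

text \<open>Column j contributes the unit entry of the replaced row i, which closes P into a cycle, so
  the path enters only through the signs of its own edges.\<close>

lemma perm_coeff_cycle_of_list_path_comp:
  assumes P: "is_path_from n s i j P" and q: "q permutes {..<n} - set P"
  shows "perm_coeff n s j (cycle_of_list P \<circ> q) =
    (-1)^(n-1) * path_sign s P * cycle_factor s ({..<n} - set P) q"
proof -
  let ?c = "cycle_of_list P" and ?U = "{..<n} - set P" and ?L = "length P"
  have ne: "P \<noteq> []" and last: "last P = j" and dist: "distinct P" and PV: "set P \<subseteq> {..<n}"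
    using P unfolding is_path_from_def by auto
  have "set P \<inter> ?U = {}"
    by blast
  note apply_comp = comp_apply_disjoint_permutes[OF cycle_permutes q this]
  have sign: "sign (?c \<circ> q) = (-1)^(?L - 1) * sign q"
    using sign_compose[OF permutation_of_cycle permutes_imp_permutation[OF _ q]] sign_cycle_of_list[OF dist]
    by simp
  have split: "{..<n} - {j} = (set P - {last P}) \<union> ?U"
    using PV last last_in_set[OF ne] by blast
  have "(\<Prod>k\<in>{..<n} - {j}. s ((?c \<circ> q) k) k) =
      (\<Prod>k\<in>set P - {last P}. s ((?c \<circ> q) k) k) * (\<Prod>k\<in>?U. s ((?c \<circ> q) k) k)"
    unfolding split by (rule prod.union_disjoint) auto
  also have "(\<Prod>k\<in>set P - {last P}. s ((?c \<circ> q) k) k) = (\<Prod>k\<in>set P - {last P}. s (?c k) k)"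
    by (rule prod.cong[OF refl]) (metis Diff_iff apply_comp(1))
  also have "\<dots> = path_sign s P"
    by (rule prod_cycle_of_list_butlast[OF dist ne])
  also have "(\<Prod>k\<in>?U. s ((?c \<circ> q) k) k) = (\<Prod>k\<in>?U. s (q k) k)"
    by (rule prod.cong[OF refl]) (metis Diff_iff apply_comp(2))
  finally have prod: "(\<Prod>k\<in>{..<n} - {j}. s ((?c \<circ> q) k) k) = path_sign s P * (\<Prod>k\<in>?U. s (q k) k)" .
  have card: "card ?U = n - ?L"
    using PV by (simp add: card_Diff_subset distinct_card[OF dist])
  have "?L \<le> n"
    using card_mono[OF finite_lessThan PV] distinct_card[OF dist] by simp
  moreover have "1 \<le> ?L"
    using ne by (cases P) auto
  ultimately have sgn: "(-1::int)^(?L - 1) = (-1)^(n - 1) * (-1)^(n - ?L)"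
    by (intro minus_one_power_path_length)
  show ?thesis
    unfolding perm_coeff_def cycle_factor_def sign prod card sgn by (simp add: mult_ac)
qed

lemma is_path_from_support:
  assumes p: "p \<in> minor_perms n i j" and "i < n" and nz: "\<forall>k\<in>{..<n} - {j}. s (p k) k \<noteq> 0"
  shows "is_path_from n s i j (support p i)"
proof -
  have pV: "p permutes {..<n}" and "p j = i"
    using p by (auto simp: minor_perms_def)
  have perm: "permutation p"
    by (rule permutes_imp_permutation[OF _ pV]) simp
  define P where "P = support p i"
  have lp: "least_power p i > 0"
    by (rule least_power_of_permutation(2)[OF perm])
  then have ne: "P \<noteq> []"
    unfolding P_def by simp
  have hd: "hd P = i"
    unfolding P_def using lp by (simp add: hd_map)
  have dist: "distinct P"
    unfolding P_def by (rule cycle_of_permutation[OF perm])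
  have PV: "set P \<subseteq> {..<n}"
    unfolding P_def by (rule set_support_subset[OF pV]) (simp add: \<open>i < n\<close>)
  have step: "p (P ! t) = P ! (Suc t mod length P)" if "t < length P" for t
    using support_step[OF perm that[unfolded P_def]] unfolding P_def .
  have "p (last P) = hd P"
    using step[of "length P - 1"] ne by (simp add: last_conv_nth hd_conv_nth)
  then have last: "last P = j"
    using hd \<open>p j = i\<close> permutes_inj[OF pV] by (metis injD)
  have "is_path_from n s i j P"
    unfolding is_path_from_def edge_def
  proof (intro conjI allI impI)
    fix t assume t: "Suc t < length P"
    then have "P ! t \<noteq> j"
      using last ne dist by (auto simp: last_conv_nth nth_eq_iff_index_eq)
    moreover have "P ! t \<in> set P"
      using t by simp
    ultimately have "s (p (P ! t)) (P ! t) \<noteq> 0"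
      using nz PV by blast
    then show "s (P ! Suc t) (P ! t) \<noteq> 0"
      using step[of t] t by simp
  qed (use ne hd last dist PV in auto)
  then show ?thesis
    unfolding P_def .
qed

lemma minor_perm_decompose:
  assumes p: "p \<in> minor_perms n i j" and "i < n" and nz: "perm_coeff n s j p \<noteq> 0"
  obtains P q where "is_path_from n s i j P" "q permutes {..<n} - set P" "p = cycle_of_list P \<circ> q"
    "\<forall>k\<in>{..<n} - set P. s (q k) k \<noteq> 0"
proof -
  have pV: "p permutes {..<n}"
    using p by (simp add: minor_perms_def)
  have iV: "i \<in> {..<n}"
    using \<open>i < n\<close> by simp
  have nz_entries: "\<forall>k\<in>{..<n} - {j}. s (p k) k \<noteq> 0"
    using nz by (auto simp: perm_coeff_def)
  define P where "P = support p i"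
  define q where "q = (\<lambda>y. if y \<in> {..<n} - set P then p y else y)"
  have P: "is_path_from n s i j P"
    unfolding P_def by (rule is_path_from_support[where s = s, OF p \<open>i < n\<close> nz_entries])
  then have "j \<in> set P"
    unfolding is_path_from_def by (metis last_in_set)
  then have "\<forall>k\<in>{..<n} - set P. s (q k) k \<noteq> 0"
    using nz_entries by (auto simp: q_def)
  moreover have "q permutes {..<n} - set P"
    unfolding P_def q_def by (rule permutes_decompose_support(1)[OF pV finite_lessThan iV])
  moreover have "p = cycle_of_list P \<circ> q"
    unfolding P_def q_def by (rule permutes_decompose_support(2)[OF pV finite_lessThan iV])
  ultimately show ?thesis
    using that P by blast
qed

lemma minor_coeff_of_path:
  assumes nd: "neg_diag n s" and P: "is_path_from n s i j P"
  shows "\<exists>p\<in>minor_perms n i j. perm_coeff n s j p = (-1)^(n-1) * path_sign s P"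
proof -
  have "cycle_factor s ({..<n} - set P) id = 1"
    by (rule cycle_factor_id[OF nd]) auto
  then show ?thesis
    using cycle_of_list_path_comp_mem_minor_perms[OF P permutes_id]
      perm_coeff_cycle_of_list_path_comp[OF P permutes_id]
    by (intro bexI[of _ "cycle_of_list P \<circ> id"]) simp_all
qed

lemma minor_coeff_of_path_and_loop:
  assumes nd: "neg_diag n s" and P: "is_path_from n s i j P" and C: "is_feedback_loop n s C"
    and disj: "set C \<inter> set P = {}"
  shows "\<exists>p\<in>minor_perms n i j. perm_coeff n s j p = - ((-1)^(n-1) * path_sign s P * cycle_sign s C)"
proof -
  let ?U = "{..<n} - set P"
  have dist: "distinct C" and ne: "C \<noteq> []" and CU: "set C \<subseteq> ?U"
    using C disj unfolding is_feedback_loop_def by auto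
  have "cycle_factor s ?U (cycle_of_list C) = cycle_factor s (set C \<union> (?U - set C)) (cycle_of_list C \<circ> id)"
    using CU by (simp add: Un_absorb1)
  also have "\<dots> = cycle_factor s (set C) (cycle_of_list C) * cycle_factor s (?U - set C) id"
    by (rule cycle_factor_compose) (auto intro: cycle_permutes permutes_id)
  also have "\<dots> = - cycle_sign s C"
    using cycle_factor_cycle_of_list[OF dist ne] cycle_factor_id[OF nd, of "?U - set C"] by auto
  finally show ?thesis
    using cycle_of_list_path_comp_mem_minor_perms[OF P permutes_subset[OF cycle_permutes CU]]
      perm_coeff_cycle_of_list_path_comp[OF P permutes_subset[OF cycle_permutes CU]]
    by (intro bexI[of _ "cycle_of_list P \<circ> cycle_of_list C"]) simp_all
qed

definition disjoint_positive_loop_and_path :: "nat \<Rightarrow> (nat \<Rightarrow> nat \<Rightarrow> int) \<Rightarrow> nat \<Rightarrow> nat \<Rightarrow> bool" where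
  "disjoint_positive_loop_and_path n s i j \<longleftrightarrow>
     (\<exists>C P. is_feedback_loop n s C \<and> cycle_sign s C = 1 \<and> is_path_from n s i j P \<and> set C \<inter> set P = {})"

lemma minor_coeff_without_positive_loop:
  assumes sp: "sign_pattern n s" and nd: "neg_diag n s" and "i < n"
    and p: "p \<in> minor_perms n i j" "perm_coeff n s j p \<noteq> 0"
    and no_loop: "\<not> disjoint_positive_loop_and_path n s i j"
  shows "\<exists>P. is_path_from n s i j P \<and> perm_coeff n s j p = (-1)^(n-1) * path_sign s P"
proof -
  obtain P q where P: "is_path_from n s i j P" and q: "q permutes {..<n} - set P"
    and pq: "p = cycle_of_list P \<circ> q" and nz: "\<forall>k\<in>{..<n} - set P. s (q k) k \<noteq> 0"
    by (rule minor_perm_decompose[OF p(1) \<open>i < n\<close> p(2)])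
  have "\<not> (\<exists>C. is_feedback_loop n s C \<and> cycle_sign s C = 1 \<and> set C \<subseteq> {..<n} - set P)"
  proof
    assume "\<exists>C. is_feedback_loop n s C \<and> cycle_sign s C = 1 \<and> set C \<subseteq> {..<n} - set P"
    then obtain C where "is_feedback_loop n s C" "cycle_sign s C = 1" "set C \<inter> set P = {}"
      by blast
    with no_loop P show False
      unfolding disjoint_positive_loop_and_path_def by blast
  qed
  then have "cycle_factor s ({..<n} - set P) q = 1"
    by (intro cycle_factor_eq_1_if_no_positive_loop[OF sp nd q _ nz]) auto
  then have "perm_coeff n s j p = (-1)^(n-1) * path_sign s P"
    unfolding pq using perm_coeff_cycle_of_list_path_comp[OF P q] by simp
  with P show ?thesis
    by blast
qed

lemma minor_coeffs_eq_0_iff_no_path: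
  assumes sp: "sign_pattern n s" and nd: "neg_diag n s" and "i < n"
  shows "(\<forall>p\<in>minor_perms n i j. perm_coeff n s j p = 0) \<longleftrightarrow> \<not> (\<exists>P. is_path_from n s i j P)"
proof
  assume vanish: "\<forall>p\<in>minor_perms n i j. perm_coeff n s j p = 0"
  show "\<not> (\<exists>P. is_path_from n s i j P)"
  proof
    assume "\<exists>P. is_path_from n s i j P"
    then obtain P where P: "is_path_from n s i j P" ..
    obtain p where "p \<in> minor_perms n i j" "perm_coeff n s j p = (-1)^(n-1) * path_sign s P"
      using minor_coeff_of_path[OF nd P] by blast
    with vanish have "(-1)^(n-1) * path_sign s P = 0"
      by simp
    with path_sign_of_path[OF sp P] show False
      by auto
  qed
next
  assume no_path: "\<not> (\<exists>P. is_path_from n s i j P)"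
  show "\<forall>p\<in>minor_perms n i j. perm_coeff n s j p = 0"
  proof (rule ballI, rule ccontr)
    fix p assume p: "p \<in> minor_perms n i j" "perm_coeff n s j p \<noteq> 0"
    obtain P q where "is_path_from n s i j P" "q permutes {..<n} - set P" "p = cycle_of_list P \<circ> q"
      "\<forall>k\<in>{..<n} - set P. s (q k) k \<noteq> 0"
      by (rule minor_perm_decompose[OF p(1) \<open>i < n\<close> p(2)])
    with no_path show False
      by blast
  qed
qed

lemma pos_neg_of_opposite_values:
  fixes f :: "'a \<Rightarrow> 'b::linordered_idom"
  assumes "x \<in> A" "y \<in> A" "f x \<noteq> 0" "f y = - f x"
  shows "(\<exists>p\<in>A. f p > 0) \<and> (\<exists>p\<in>A. f p < 0)"
proof (cases "f x > 0")
  case True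
  with assms have "f y < 0"
    by simp
  with True assms show ?thesis
    by blast
next
  case False
  with assms have "f x < 0" "f y > 0"
    by auto
  with assms show ?thesis
    by blast
qed

lemma mixed_minor_coeffs_of_incoherent_ffl:
  assumes sp: "sign_pattern n s" and nd: "neg_diag n s" and "incoherent_ffl n s i j"
  shows "(\<exists>p\<in>minor_perms n i j. perm_coeff n s j p > 0) \<and> (\<exists>p\<in>minor_perms n i j. perm_coeff n s j p < 0)"
proof -
  obtain P1 P2 where P: "is_path_from n s i j P1" "is_path_from n s i j P2"
    and opposite: "path_sign s P1 = - path_sign s P2"
    using assms(3) unfolding incoherent_ffl_def by blast
  obtain p1 where p1: "p1 \<in> minor_perms n i j" "perm_coeff n s j p1 = (-1)^(n-1) * path_sign s P1"
    using minor_coeff_of_path[OF nd P(1)] by blast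
  obtain p2 where p2: "p2 \<in> minor_perms n i j" "perm_coeff n s j p2 = (-1)^(n-1) * path_sign s P2"
    using minor_coeff_of_path[OF nd P(2)] by blast
  have "perm_coeff n s j p1 \<noteq> 0" "perm_coeff n s j p2 = - perm_coeff n s j p1"
    using p1(2) p2(2) opposite path_sign_of_path[OF sp P(1)] by auto
  then show ?thesis
    by (rule pos_neg_of_opposite_values[where f = "perm_coeff n s j", OF p1(1) p2(1)])
qed

lemma mixed_minor_coeffs_of_positive_loop:
  assumes sp: "sign_pattern n s" and nd: "neg_diag n s" and "disjoint_positive_loop_and_path n s i j"
  shows "(\<exists>p\<in>minor_perms n i j. perm_coeff n s j p > 0) \<and> (\<exists>p\<in>minor_perms n i j. perm_coeff n s j p < 0)"
proof -
  obtain C P where C: "is_feedback_loop n s C" "cycle_sign s C = 1"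
    and P: "is_path_from n s i j P" and disj: "set C \<inter> set P = {}"
    using assms(3) unfolding disjoint_positive_loop_and_path_def by blast
  obtain p1 where p1: "p1 \<in> minor_perms n i j" "perm_coeff n s j p1 = (-1)^(n-1) * path_sign s P"
    using minor_coeff_of_path[OF nd P] by blast
  obtain p2 where p2: "p2 \<in> minor_perms n i j"
    "perm_coeff n s j p2 = - ((-1)^(n-1) * path_sign s P * cycle_sign s C)"
    using minor_coeff_of_path_and_loop[OF nd P C(1) disj] by blast
  have "perm_coeff n s j p1 \<noteq> 0" "perm_coeff n s j p2 = - perm_coeff n s j p1"
    using p1(2) p2(2) C(2) path_sign_of_path[OF sp P] by auto
  then show ?thesis
    by (rule pos_neg_of_opposite_values[where f = "perm_coeff n s j", OF p1(1) p2(1)])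
qed

lemma incoherent_ffl_of_mixed_minor_coeffs:
  assumes sp: "sign_pattern n s" and nd: "neg_diag n s" and "i < n"
    and no_loop: "\<not> disjoint_positive_loop_and_path n s i j"
    and p1: "p1 \<in> minor_perms n i j" "perm_coeff n s j p1 > 0"
    and p2: "p2 \<in> minor_perms n i j" "perm_coeff n s j p2 < 0"
  shows "incoherent_ffl n s i j"
proof -
  obtain P1 where P1: "is_path_from n s i j P1" "perm_coeff n s j p1 = (-1)^(n-1) * path_sign s P1"
    using minor_coeff_without_positive_loop[OF sp nd \<open>i < n\<close> p1(1) _ no_loop] p1(2) by auto
  obtain P2 where P2: "is_path_from n s i j P2" "perm_coeff n s j p2 = (-1)^(n-1) * path_sign s P2"
    using minor_coeff_without_positive_loop[OF sp nd \<open>i < n\<close> p2(1) _ no_loop] p2(2) by auto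
  have "path_sign s P1 \<noteq> path_sign s P2"
    using P1(2) P2(2) p1(2) p2(2) by auto
  then have "path_sign s P1 = - path_sign s P2" and "P1 \<noteq> P2"
    using path_sign_of_path[OF sp P1(1)] path_sign_of_path[OF sp P2(1)] by auto
  with P1(1) P2(1) show ?thesis
    unfolding incoherent_ffl_def by blast
qed

lemma mixed_minor_coeffs_iff:
  assumes sp: "sign_pattern n s" and nd: "neg_diag n s" and "i < n"
  shows "(\<exists>p\<in>minor_perms n i j. perm_coeff n s j p > 0) \<and> (\<exists>p\<in>minor_perms n i j. perm_coeff n s j p < 0)
    \<longleftrightarrow> incoherent_ffl n s i j \<or> disjoint_positive_loop_and_path n s i j"
proof
  assume "(\<exists>p\<in>minor_perms n i j. perm_coeff n s j p > 0) \<and> (\<exists>p\<in>minor_perms n i j. perm_coeff n s j p < 0)"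
  then obtain p1 p2 where "p1 \<in> minor_perms n i j" "perm_coeff n s j p1 > 0"
    and "p2 \<in> minor_perms n i j" "perm_coeff n s j p2 < 0"
    by blast
  then show "incoherent_ffl n s i j \<or> disjoint_positive_loop_and_path n s i j"
    using incoherent_ffl_of_mixed_minor_coeffs[OF sp nd \<open>i < n\<close>] by blast
next
  assume "incoherent_ffl n s i j \<or> disjoint_positive_loop_and_path n s i j"
  then show "(\<exists>p\<in>minor_perms n i j. perm_coeff n s j p > 0) \<and> (\<exists>p\<in>minor_perms n i j. perm_coeff n s j p < 0)"
    using mixed_minor_coeffs_of_incoherent_ffl[OF sp nd] mixed_minor_coeffs_of_positive_loop[OF sp nd] by blast
qed

theorem lemma2:
  fixes n i j :: nat and s :: "nat \<Rightarrow> nat \<Rightarrow> int"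
  assumes "sign_pattern n s" and "neg_diag n s"
    and "i < n" and "j < n" and "i \<noteq> j"
  shows "(det (mat_delete (sym_mat n s) i j) = 0 \<longleftrightarrow> \<not> (\<exists>P. is_path_from n s i j P))
       \<and> ((\<exists>P. is_path_from n s i j P) \<longrightarrow>
          (mixed_signs (det (mat_delete (sym_mat n s) i j)) \<longleftrightarrow>
             incoherent_ffl n s i j \<or>
             (\<exists>C P. is_feedback_loop n s C \<and> cycle_sign s C = 1 \<and> is_path_from n s i j P
                    \<and> set C \<inter> set P = {})))"
  using det_minor_eq_0_iff[OF assms(3,4), of s] minor_coeffs_eq_0_iff_no_path[OF assms(1-3), of j]
    mixed_signs_det_minor_iff[OF assms(3,4), of s] mixed_minor_coeffs_iff[OF assms(1-3), of j]
  unfolding disjoint_positive_loop_and_path_def by simp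

end
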